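(* Let $T$ be a finite rooted tree in which every inner node has at least two children, with node set $V$ and leaf set $L$. Let $X\subseteq V\setminus L$ and $s\in V\setminus X$. If $X$ is thin, then there exists a leaf $t$ which is a descendant of $s$ such that no node on the path from $t$ to $s$ belongs to $X$.
   Context: A set $X\subseteq V\setminus L$ of inner nodes is thin if for every $x\in X$ other than the root, the parent of $x$ does not belong to $X$, and $x$ has at least one sibling (possibly a leaf) that does not belong to $X$. Every node is its own descendant. *)

theory Defs
  imports Main
begin

text \<open>The root is its own parent (par r = r) and every node
  reaches the root by iterating par; this rules out cycles.\<close>

definition rooted_tree :: "'a set \<Rightarrow> 'a \<Rightarrow> ('a \<Rightarrow> 'a) \<Rightarrow> bool" where
  "rooted_tree V r par \<longleftrightarrow> finite V \<and> r \<in> V \<and> par r = r \<and>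
     (\<forall>v\<in>V. par v \<in> V) \<and> (\<forall>v\<in>V. \<exists>n. (par ^^ n) v = r)"

definition children :: "'a set \<Rightarrow> 'a \<Rightarrow> ('a \<Rightarrow> 'a) \<Rightarrow> 'a \<Rightarrow> 'a set" where
  "children V r par v = {c \<in> V. c \<noteq> r \<and> par c = v}"

definition leaves :: "'a set \<Rightarrow> 'a \<Rightarrow> ('a \<Rightarrow> 'a) \<Rightarrow> 'a set" where
  "leaves V r par = {v \<in> V. children V r par v = {}}"

definition full_branching :: "'a set \<Rightarrow> 'a \<Rightarrow> ('a \<Rightarrow> 'a) \<Rightarrow> bool" where
  "full_branching V r par \<longleftrightarrow>
     (\<forall>v \<in> V - leaves V r par. card (children V r par v) \<ge> 2)"

definition thin :: "'a set \<Rightarrow> 'a \<Rightarrow> ('a \<Rightarrow> 'a) \<Rightarrow> 'a set \<Rightarrow> bool" where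
  "thin V r par X \<longleftrightarrow> X \<subseteq> V - leaves V r par \<and>
     (\<forall>x\<in>X. x \<noteq> r \<longrightarrow>
        par x \<notin> X \<and> (\<exists>y \<in> children V r par (par x). y \<noteq> x \<and> y \<notin> X))"

end

theory Submission
  imports Defs
begin

text \<open>Descend from s greedily: an inner node outside X always has a child outside X
  (a child in X has, by thinness, a sibling outside X). The walk stays outside X and,
  since the descendant sets shrink strictly, ends at a leaf.\<close>

definition descendants :: "'a set \<Rightarrow> ('a \<Rightarrow> 'a) \<Rightarrow> 'a \<Rightarrow> 'a set" where
  "descendants V par v = {w \<in> V. \<exists>n. (par ^^ n) w = v}"

lemma funpow_fixpoint_mono:
  assumes "f r = r" "(f ^^ m) x = r" "m \<le> n"
  shows "(f ^^ n) x = r"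
proof -
  obtain d where "n = d + m"
    using assms(3) by (metis le_add_diff_inverse2)
  then have "(f ^^ n) x = (f ^^ d) r"
    using assms(2) by (simp add: funpow_add)
  also have "\<dots> = r"
    by (induction d) (simp_all add: assms(1))
  finally show ?thesis .
qed

lemma rooted_tree_periodic_eq_root:
  assumes "rooted_tree V r par" "c \<in> V" "(par ^^ Suc n) c = c"
  shows "c = r"
proof -
  obtain m where "par r = r" and "(par ^^ m) c = r"
    using assms(1,2) unfolding rooted_tree_def by blast
  have "c = (par ^^ (m * Suc n mod Suc n)) c"
    by (simp only: mod_mult_self2_is_0 funpow_0)
  also have "\<dots> = (par ^^ (m * Suc n)) c"
    by (rule funpow_mod_eq[OF assms(3)])
  also have "\<dots> = r"
    using \<open>par r = r\<close> \<open>(par ^^ m) c = r\<close> by (rule funpow_fixpoint_mono) simp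
  finally show ?thesis .
qed

lemma descendants_child_psubset:
  assumes "rooted_tree V r par" "y \<in> children V r par v"
  shows "descendants V par y \<subset> descendants V par v"
proof
  have y: "y \<in> V" "y \<noteq> r" "par y = v"
    using assms(2) unfolding children_def by auto
  show "descendants V par y \<subseteq> descendants V par v"
  proof
    fix w assume "w \<in> descendants V par y"
    then obtain n where "w \<in> V" "(par ^^ n) w = y"
      unfolding descendants_def by blast
    moreover from \<open>(par ^^ n) w = y\<close> have "(par ^^ Suc n) w = v"
      using y(3) by simp
    ultimately show "w \<in> descendants V par v"
      unfolding descendants_def by blast
  qed
  have "v \<in> V"
    using assms(1) y unfolding rooted_tree_def by blast
  then have "v \<in> descendants V par v"
    unfolding descendants_def by (auto intro: exI[of _ 0])
  moreover have "v \<notin> descendants V par y"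
  proof
    assume "v \<in> descendants V par y"
    then obtain n where "(par ^^ n) v = y"
      unfolding descendants_def by blast
    then have "(par ^^ Suc n) y = y"
      using y(3) by (simp add: funpow_swap1)
    then show False
      using rooted_tree_periodic_eq_root[OF assms(1) y(1)] y(2) by blast
  qed
  ultimately show "descendants V par y \<noteq> descendants V par v"
    by blast
qed

lemma thin_child_notin:
  assumes "thin V r par X" "v \<in> V - leaves V r par"
  shows "\<exists>y \<in> children V r par v. y \<notin> X"
proof -
  obtain c where c: "c \<in> children V r par v"
    using assms(2) unfolding leaves_def by auto
  show ?thesis
  proof (cases "c \<in> X")
    case True
    moreover have "c \<noteq> r" "par c = v"
      using c unfolding children_def by auto
    ultimately show ?thesis
      using assms(1) unfolding thin_def by metis
  qed (use c in blast)
qed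

lemma leaf_path_avoiding:
  assumes "rooted_tree V r par" "s \<in> V - X"
    and "\<And>v. v \<in> V - X - leaves V r par \<Longrightarrow> \<exists>y \<in> children V r par v. y \<notin> X"
  shows "\<exists>t \<in> leaves V r par. \<exists>n. (par ^^ n) t = s \<and> (\<forall>k\<le>n. (par ^^ k) t \<notin> X)"
  using assms(2)
proof (induction s rule: measure_induct_rule[of "\<lambda>v. card (descendants V par v)"])
  case (less v)
  show ?case
  proof (cases "v \<in> leaves V r par")
    case True
    then show ?thesis
      using less.prems by (intro bexI[of _ v] exI[of _ 0]) auto
  next
    case False
    then obtain y where y: "y \<in> children V r par v" "y \<notin> X"
      using assms(3) less.prems by blast
    have "finite (descendants V par v)"
      using assms(1) unfolding rooted_tree_def descendants_def by simp
    then have "card (descendants V par y) < card (descendants V par v)"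
      using descendants_child_psubset[OF assms(1) y(1)] by (rule psubset_card_mono)
    moreover have "y \<in> V - X" "par y = v"
      using y unfolding children_def by auto
    ultimately obtain t n where t: "t \<in> leaves V r par" "(par ^^ n) t = y"
        "\<forall>k\<le>n. (par ^^ k) t \<notin> X"
      using less.IH[of y] by blast
    have "(par ^^ Suc n) t = v"
      using t(2) \<open>par y = v\<close> by simp
    moreover have "(par ^^ k) t \<notin> X" if "k \<le> Suc n" for k
      using that t(3) calculation less.prems by (cases "k = Suc n") auto
    ultimately show ?thesis
      using t(1) by blast
  qed
qed

theorem lemma3p7:
  assumes "rooted_tree V r par"
    and "full_branching V r par"
    and "X \<subseteq> V - leaves V r par"
    and "s \<in> V - X"
    and "thin V r par X"
  shows "\<exists>t \<in> leaves V r par. \<exists>n. (par ^^ n) t = s \<and> (\<forall>k\<le>n. (par ^^ k) t \<notin> X)"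
  by (rule leaf_path_avoiding[OF assms(1,4)]) (use thin_child_notin[OF assms(5)] in blast)

end
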